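(* Let $C$ be a binary linear $[n,k]$ code whose hull $\mathrm{Hull}(C)=C\cap C^{\perp}$ has dimension $\ell$, where $0\le\ell\le k$. Let $G$ be a $k\times n$ generator matrix of $C$ with rows $\mathbf r_1,\dots,\mathbf r_k$ and $H$ an $(n-k)\times n$ parity check matrix of $C$ with rows $\mathbf s_1,\dots,\mathbf s_{n-k}$. Suppose $\mathbf x=(x_1,\dots,x_n)\in\mathbb F_2^n$ satisfies $\mathbf x\cdot\mathbf x=0$. Put $y_i=\mathbf x\cdot\mathbf r_i$ ($1\le i\le k$) and $z_j=\mathbf x\cdot\mathbf s_j$ ($1\le j\le n-k$). Then: (a) the matrix \[ G_2=\begin{bmatrix} 1 & 1 & x_1\ \cdots\ x_n\\ y_1 & 0 & \mathbf r_1\\ \vdots & \vdots & \vdots\\ y_k & 0 & \mathbf r_k\end{bmatrix} \] generates a binary linear $[n+2,k+1]$ code $C_2$ whose hull has dimension $\ell$, $\ell+1$ or $\ell+2$. More precisely: if $y_i=0$ for all $1\le i\le k$, then the hull of $C_2$ has dimension $\ell+1$; if $y_i\neq 0$ for some $1\le i\le k$, then the hull of $C_2$ has dimension $\ell$, $\ell+1$, or $\ell+2$. (b) the matrix \[ H_2=\begin{bmatrix} 1 & 1 & x_1\ \cdots\ x_n\\ 0 & z_1 & \mathbf s_1\\ \vdots & \vdots & \vdots\\ 0 & z_{n-k} & \mathbf s_{n-k}\end{bmatrix} \] is a parity check matrix for $C_2$.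
   Context: All codes are binary linear codes; the dual is taken with respect to the standard dot product on $\mathbb F_2^n$, and $\mathrm{Hull}(C)=C\cap C^{\perp}$. A parity check matrix of $C$ is a generator matrix of $C^{\perp}$. The case where all $y_i=0$ is called Construction II; the case where some $y_i\ne 0$ is called Construction III. *)

theory Defs
  imports Main "HOL-Library.Z2"
begin

text \<open>Vectors of F_2^n are lists of length n over the two-element field bit.
  A matrix is a list of rows. Linear codes are subsets of F_2^n.\<close>

definition vecs :: "nat \<Rightarrow> bit list set" where
  "vecs n = {v. length v = n}"

definition vzero :: "nat \<Rightarrow> bit list" where
  "vzero n = replicate n 0"

definition vadd :: "bit list \<Rightarrow> bit list \<Rightarrow> bit list" where
  "vadd u v = map2 (+) u v"

definition vsmult :: "bit \<Rightarrow> bit list \<Rightarrow> bit list" where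
  "vsmult c v = map ((*) c) v"

definition dot :: "bit list \<Rightarrow> bit list \<Rightarrow> bit" where
  "dot u v = (\<Sum>i<length u. u ! i * v ! i)"

definition lincomb :: "nat \<Rightarrow> bit list list \<Rightarrow> bit list \<Rightarrow> bit list" where
  "lincomb n rows cs = foldr vadd (map2 vsmult cs rows) (vzero n)"

definition span :: "nat \<Rightarrow> bit list list \<Rightarrow> bit list set" where
  "span n rows = {lincomb n rows cs | cs. length cs = length rows}"

definition linear_code :: "nat \<Rightarrow> bit list set \<Rightarrow> bool" where
  "linear_code n C \<longleftrightarrow> C \<subseteq> vecs n \<and> vzero n \<in> C \<and>
     (\<forall>u\<in>C. \<forall>v\<in>C. vadd u v \<in> C) \<and> (\<forall>c u. u \<in> C \<longrightarrow> vsmult c u \<in> C)"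

definition code_dim :: "nat \<Rightarrow> bit list set \<Rightarrow> nat" where
  "code_dim n C = (LEAST k. \<exists>rows. length rows = k \<and> set rows \<subseteq> vecs n \<and> span n rows = C)"

definition dual :: "nat \<Rightarrow> bit list set \<Rightarrow> bit list set" where
  "dual n C = {v \<in> vecs n. \<forall>c\<in>C. dot v c = 0}"

definition hull :: "nat \<Rightarrow> bit list set \<Rightarrow> bit list set" where
  "hull n C = C \<inter> dual n C"

definition is_code :: "nat \<Rightarrow> nat \<Rightarrow> bit list set \<Rightarrow> bool" where
  "is_code n k C \<longleftrightarrow> linear_code n C \<and> code_dim n C = k"

definition generator_matrix :: "nat \<Rightarrow> nat \<Rightarrow> bit list list \<Rightarrow> bit list set \<Rightarrow> bool" where
  "generator_matrix n k G C \<longleftrightarrow> length G = k \<and> set G \<subseteq> vecs n \<and> span n G = C"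

definition parity_check_matrix :: "nat \<Rightarrow> nat \<Rightarrow> bit list list \<Rightarrow> bit list set \<Rightarrow> bool" where
  "parity_check_matrix n m H C \<longleftrightarrow> generator_matrix n m H (dual n C)"

end

theory Submission
  imports Defs
begin

(*
  Let v = (1, 1, x) and lift c to (x.c, 0, c). The lift is additive and injective, v is
  orthogonal to every lift and, as x.x = 0, to itself. Hence C2 is the disjoint union of the
  lifted code P and its translate v + P, so |C2| = 2|C|. A word (a, b, w) is orthogonal to C2
  iff w + a x lies in the dual of C and b = a + w.x; since x.x = 0 these words are exactly the
  lifts (0, x.s, s) of the s in the dual of C and their translates by v, i.e. the row space
  of H2.

  By the same criterion the lift of c, and its translate by v, lie in the dual of C2 iff the
  transvection c + (x.c) x lies in the dual of C, so |Hull(C2)| = 2|K| for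
  K = {c in C. c + (x.c) x in dual C}. The transvection fixes the hyperplane of words
  orthogonal to x, so K and Hull(C) meet it in the same subspace, which has index at most 2
  in both. Thus |Hull(C)| <= 2|K| <= 4|Hull(C)|, and K = Hull(C) when x is orthogonal to C.
  Dimensions are read off from |V| = 2^(dim V).
*)

section \<open>Vectors over F_2\<close>

(* keep bit arithmetic in field form rather than rewriting it to XOR and AND *)
declare add_bit_eq_xor [simp del] mult_bit_eq_and [simp del]

lemma bit_add_eq_0_iff: "(a::bit) + b = 0 \<longleftrightarrow> a = b"
  by (cases a; cases b) (simp_all add: one_add_one)

lemma UNIV_bit: "(UNIV :: bit set) = {0, 1}"
  by (auto intro: bit.exhaust)

lemma mem_vecs_iff [simp]: "v \<in> vecs n \<longleftrightarrow> length v = n"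
  by (simp add: vecs_def)

lemma length_vadd [simp]: "length (vadd u v) = min (length u) (length v)"
  by (simp add: vadd_def)

lemma nth_vadd [simp]: "i < length u \<Longrightarrow> i < length v \<Longrightarrow> vadd u v ! i = u ! i + v ! i"
  by (simp add: vadd_def)

lemma vadd_Cons [simp]: "vadd (a # u) (b # v) = (a + b) # vadd u v"
  by (simp add: vadd_def)

lemma length_vsmult [simp]: "length (vsmult c v) = length v"
  by (simp add: vsmult_def)

lemma nth_vsmult [simp]: "i < length v \<Longrightarrow> vsmult c v ! i = c * v ! i"
  by (simp add: vsmult_def)

lemma length_vzero [simp]: "length (vzero n) = n"
  by (simp add: vzero_def)

lemma nth_vzero [simp]: "i < n \<Longrightarrow> vzero n ! i = 0"
  by (simp add: vzero_def)

lemma vzero_Suc: "vzero (Suc n) = 0 # vzero n"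
  by (simp add: vzero_def)

lemma vadd_commute: "vadd u v = vadd v u"
  by (rule nth_equalityI) (auto simp: add.commute)

lemma vadd_assoc: "vadd (vadd u v) w = vadd u (vadd v w)"
  by (rule nth_equalityI) (auto simp: add.assoc)

lemma vadd_left_commute: "vadd u (vadd v w) = vadd v (vadd u w)"
  by (metis vadd_assoc vadd_commute)

lemma vadd_vzero [simp]: "length u = n \<Longrightarrow> vadd u (vzero n) = u"
  by (rule nth_equalityI) auto

lemma vzero_vadd [simp]: "length u = n \<Longrightarrow> vadd (vzero n) u = u"
  by (rule nth_equalityI) auto

lemma vadd_self [simp]: "vadd u u = vzero (length u)"
  by (rule nth_equalityI) auto

lemma vadd_cancel_left [simp]: "length u = length v \<Longrightarrow> vadd u (vadd u v) = v"
  by (rule nth_equalityI) auto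

lemma vadd_eq_iff_left:
  "length u = length v \<Longrightarrow> length w = length v \<Longrightarrow> w = vadd u v \<longleftrightarrow> v = vadd u w"
  by (metis vadd_cancel_left)

lemma vsmult_0 [simp]: "vsmult 0 u = vzero (length u)"
  by (rule nth_equalityI) auto

lemma vsmult_1 [simp]: "vsmult 1 u = u"
  by (rule nth_equalityI) auto

lemma vsmult_eq_if: "vsmult c u = (if c = 1 then u else vzero (length u))"
  by (cases c) auto

lemma dot_Cons [simp]: "dot (a # u) (b # v) = a * b + dot u v"
  unfolding dot_def by (simp only: length_Cons sum.lessThan_Suc_shift) simp

lemma dot_commute: "length u = length v \<Longrightarrow> dot u v = dot v u"
  by (induction u v rule: list_induct2) (auto simp: mult.commute)

lemma dot_vadd_right:
  "length v = length u \<Longrightarrow> length w = length u \<Longrightarrow> dot u (vadd v w) = dot u v + dot u w"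
  unfolding dot_def by (simp add: distrib_left sum.distrib)

lemma dot_vadd_left:
  "length v = length u \<Longrightarrow> length w = length u \<Longrightarrow> dot (vadd v w) u = dot v u + dot w u"
  unfolding dot_def by (simp add: distrib_right sum.distrib)

lemma dot_vsmult_left: "dot (vsmult c v) u = c * dot v u"
  unfolding dot_def by (simp add: sum_distrib_left algebra_simps)

lemma dot_vzero_left [simp]: "dot (vzero n) u = 0"
  by (simp add: dot_def)

lemma dot_vzero_right [simp]: "length u = n \<Longrightarrow> dot u (vzero n) = 0"
  by (simp add: dot_def)

section \<open>Spans and linear codes\<close>

lemma lincomb_Nil [simp]: "lincomb n [] cs = vzero n"
  by (simp add: lincomb_def)

lemma lincomb_Cons [simp]: "lincomb n (r # rs) (c # cs) = vadd (vsmult c r) (lincomb n rs cs)"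
  by (simp add: lincomb_def)

lemma length_lincomb:
  "set rows \<subseteq> vecs n \<Longrightarrow> length cs = length rows \<Longrightarrow> length (lincomb n rows cs) = n"
  by (induction rows cs rule: list_induct2') auto

lemma span_Nil [simp]: "span n [] = {vzero n}"
  by (simp add: span_def)

lemma span_Cons: "span n (r # rs) = {vadd (vsmult c r) w | c w. w \<in> span n rs}"
proof -
  have "span n (r # rs) = {lincomb n (r # rs) (c # cs) | c cs. length cs = length rs}"
    unfolding span_def length_Cons length_Suc_conv by blast
  then show ?thesis
    unfolding span_def lincomb_Cons by blast
qed

lemma span_subset_vecs: "set rows \<subseteq> vecs n \<Longrightarrow> span n rows \<subseteq> vecs n"
  by (auto simp: span_def length_lincomb)

lemma span_Cons_Un:
  assumes "length r = n" and "set rs \<subseteq> vecs n"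
  shows "span n (r # rs) = span n rs \<union> vadd r ` span n rs"
proof -
  have "{vadd (vsmult c r) w | c w. w \<in> span n rs} = (\<Union>c\<in>UNIV. vadd (vsmult c r) ` span n rs)"
    by blast
  moreover have "vadd (vzero n) ` span n rs = span n rs"
    using span_subset_vecs[OF assms(2)] by (force simp: subset_iff)
  ultimately show ?thesis
    unfolding span_Cons UNIV_bit using assms(1) by auto
qed

lemma linear_code_if_add_closed:
  assumes "S \<subseteq> vecs n" and "vzero n \<in> S" and "\<And>u v. u \<in> S \<Longrightarrow> v \<in> S \<Longrightarrow> vadd u v \<in> S"
  shows "linear_code n S"
  using assms unfolding linear_code_def by (auto simp: vsmult_eq_if subset_iff)

lemma linear_code_vecs: "linear_code n S \<Longrightarrow> S \<subseteq> vecs n"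
  by (simp add: linear_code_def)

lemma linear_code_vzero: "linear_code n S \<Longrightarrow> vzero n \<in> S"
  by (simp add: linear_code_def)

lemma linear_code_vadd: "linear_code n S \<Longrightarrow> u \<in> S \<Longrightarrow> v \<in> S \<Longrightarrow> vadd u v \<in> S"
  by (simp add: linear_code_def)

lemma linear_code_Int: "linear_code n A \<Longrightarrow> linear_code n B \<Longrightarrow> linear_code n (A \<inter> B)"
  unfolding linear_code_def by auto

lemma linear_code_Un_translate:
  assumes S: "linear_code n S" and r: "length r = n"
  shows "linear_code n (S \<union> vadd r ` S)"
proof (rule linear_code_if_add_closed)
  show "S \<union> vadd r ` S \<subseteq> vecs n" "vzero n \<in> S \<union> vadd r ` S"
    using linear_code_vecs[OF S] linear_code_vzero[OF S] r by auto
next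
  fix u v assume "u \<in> S \<union> vadd r ` S" "v \<in> S \<union> vadd r ` S"
  then obtain a b where ab: "a \<in> S" "b \<in> S"
    and u: "u = a \<or> u = vadd r a" and v: "v = b \<or> v = vadd r b"
    by blast
  have "length a = n" "length b = n"
    using ab linear_code_vecs[OF S] by auto
  then have "vadd u v = vadd a b \<or> vadd u v = vadd r (vadd a b)"
    using u v r by (auto simp: vadd_assoc vadd_left_commute[of a r])
  then show "vadd u v \<in> S \<union> vadd r ` S"
    using linear_code_vadd[OF S ab] by auto
qed

lemma linear_code_span: "set rows \<subseteq> vecs n \<Longrightarrow> linear_code n (span n rows)"
proof (induction rows)
  case Nil
  show ?case
    by (rule linear_code_if_add_closed) auto
next
  case (Cons r rs)
  then show ?case
    using linear_code_Un_translate span_Cons_Un by simp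
qed

lemma span_subset_linear_code: "linear_code n V \<Longrightarrow> set rows \<subseteq> V \<Longrightarrow> span n rows \<subseteq> V"
  by (induction rows) (auto simp: span_Cons linear_code_def)

lemma set_subset_span:
  assumes "set rows \<subseteq> vecs n"
  shows "set rows \<subseteq> span n rows"
  using assms
proof (induction rows)
  case (Cons r rs)
  then have "r = vadd r (vzero n)" "vzero n \<in> span n rs"
    using linear_code_vzero[OF linear_code_span] by auto
  then have "r \<in> vadd r ` span n rs"
    by blast
  then show ?case
    using Cons span_Cons_Un[of r n rs] by auto
qed simp

lemma span_map:
  assumes rows: "set rows \<subseteq> vecs n"
    and len: "\<And>u. length u = n \<Longrightarrow> length (f u) = m"
    and zero: "f (vzero n) = vzero m"
    and add: "\<And>u v. length u = n \<Longrightarrow> length v = n \<Longrightarrow> f (vadd u v) = vadd (f u) (f v)"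
  shows "span m (map f rows) = f ` span n rows"
  using rows
proof (induction rows)
  case (Cons r rs)
  then have "span n rs \<subseteq> vecs n"
    by (simp add: span_subset_vecs)
  then have "length w = n" if "w \<in> span n rs" for w
    using that by auto
  then have "vadd (f r) ` f ` span n rs = f ` vadd r ` span n rs"
    using Cons.prems by (auto simp: add image_image)
  moreover have "set (map f rs) \<subseteq> vecs m" "length (f r) = m"
    using Cons.prems len by auto
  ultimately have "span m (map f (r # rs)) = f ` (span n rs \<union> vadd r ` span n rs)"
    using Cons by (simp add: span_Cons_Un image_Un)
  then show ?case
    using Cons.prems span_Cons_Un[of r n rs] by simp
qed (simp add: zero)

lemma span_Cons_map:
  assumes "set rows \<subseteq> vecs n" and "length v = m"
    and "\<And>u. length u = n \<Longrightarrow> length (f u) = m"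
    and "f (vzero n) = vzero m"
    and "\<And>u v. length u = n \<Longrightarrow> length v = n \<Longrightarrow> f (vadd u v) = vadd (f u) (f v)"
  shows "span m (v # map f rows) = f ` span n rows \<union> vadd v ` f ` span n rows"
proof -
  have "set (map f rows) \<subseteq> vecs m"
    using assms(1,3) by auto
  with assms(2) have "span m (v # map f rows) = span m (map f rows) \<union> vadd v ` span m (map f rows)"
    by (rule span_Cons_Un)
  also have "span m (map f rows) = f ` span n rows"
    using assms(1) assms(3-5) by (rule span_map)
  finally show ?thesis .
qed

section \<open>Cardinality and dimension\<close>

lemma vecs_eq_lists: "vecs n = {xs. set xs \<subseteq> UNIV \<and> length xs = n}"
  by (auto simp: vecs_def)

lemma finite_vecs [simp]: "finite (vecs n)"
proof -
  have "finite (UNIV :: bit set)"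
    by (simp add: UNIV_bit)
  then show ?thesis
    unfolding vecs_eq_lists by (rule finite_lists_length_eq)
qed

lemma card_vecs: "card (vecs n) = 2 ^ n"
proof -
  have "finite (UNIV :: bit set)" "card (UNIV :: bit set) = 2"
    by (simp_all add: UNIV_bit)
  then show ?thesis
    unfolding vecs_eq_lists by (simp only: card_lists_length_eq)
qed

lemma finite_subset_vecs: "S \<subseteq> vecs n \<Longrightarrow> finite S"
  by (rule finite_subset[OF _ finite_vecs])

lemma inj_on_vadd:
  assumes "P \<subseteq> vecs (length v)"
  shows "inj_on (vadd v) P"
proof (rule inj_onI)
  fix a b assume "a \<in> P" "b \<in> P" "vadd v a = vadd v b"
  moreover have "length a = length v" "length b = length v"
    using \<open>a \<in> P\<close> \<open>b \<in> P\<close> assms by auto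
  ultimately show "a = b"
    using vadd_cancel_left by metis
qed

lemma card_Un_translate:
  assumes "P \<subseteq> vecs m" and "length v = m" and "P \<inter> vadd v ` P = {}"
  shows "card (P \<union> vadd v ` P) = 2 * card P"
proof -
  have "finite P"
    using assms(1) by (rule finite_subset_vecs)
  then show ?thesis
    using assms inj_on_vadd[of P v] by (simp add: card_Un_disjoint card_image)
qed

lemma card_span_le: "set rows \<subseteq> vecs n \<Longrightarrow> card (span n rows) \<le> 2 ^ length rows"
proof (induction rows)
  case (Cons r rs)
  then have "set rs \<subseteq> vecs n"
    by simp
  then have "finite (span n rs)"
    by (rule finite_subset_vecs[OF span_subset_vecs])
  then have "card (span n rs \<union> vadd r ` span n rs) \<le> 2 * card (span n rs)"
    using card_Un_le[of "span n rs" "vadd r ` span n rs"] card_image_le[of "span n rs" "vadd r"]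
    by linarith
  then show ?case
    using Cons by (simp add: span_Cons_Un)
qed simp

lemma disjoint_translate:
  assumes S: "linear_code n S" and r: "length r = n" "r \<notin> S"
  shows "S \<inter> vadd r ` S = {}"
proof (rule ccontr)
  assume "S \<inter> vadd r ` S \<noteq> {}"
  then obtain w where w: "w \<in> S" "vadd r w \<in> S"
    by blast
  then have "vadd (vadd r w) w \<in> S"
    using linear_code_vadd[OF S] by blast
  moreover have "length w = n"
    using w linear_code_vecs[OF S] by auto
  ultimately show False
    using r by (simp add: vadd_assoc)
qed

lemma span_basis_exists:
  assumes "set rows \<subseteq> vecs n"
  obtains rows' where "set rows' \<subseteq> vecs n" "span n rows' = span n rows"
    "card (span n rows') = 2 ^ length rows'"
  using assms
proof (induction rows arbitrary: thesis)
  case Nil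
  then show ?case by fastforce
next
  case (Cons r rs)
  obtain rs' where rs': "set rs' \<subseteq> vecs n" "span n rs' = span n rs"
    "card (span n rs') = 2 ^ length rs'"
    using Cons by auto
  have r: "length r = n" and rs: "set rs \<subseteq> vecs n"
    using Cons.prems by auto
  have span_Cons: "span n (r # rs) = span n (r # rs')"
    using span_Cons_Un[OF r rs] span_Cons_Un[OF r rs'(1)] rs'(2) by simp
  show ?case
  proof (cases "r \<in> span n rs")
    case True
    then have "span n (r # rs) = span n rs"
      using span_Cons_Un[OF r rs] linear_code_vadd[OF linear_code_span[OF rs]] by auto
    then show ?thesis
      using Cons.prems(1)[OF rs'(1)] rs' by simp
  next
    case False
    then have "card (span n (r # rs')) = 2 ^ length (r # rs')"
      using card_Un_translate[OF span_subset_vecs[OF rs] r]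
        disjoint_translate[OF linear_code_span[OF rs] r] span_Cons_Un[OF r rs'(1)] rs'
      by simp
    then show ?thesis
      using Cons.prems(1)[of "r # rs'"] rs'(1) r span_Cons by simp
  qed
qed

lemma card_span:
  assumes "set rows \<subseteq> vecs n"
  shows "card (span n rows) = 2 ^ code_dim n (span n rows)"
proof -
  let ?spans = "\<lambda>k. \<exists>rs. length rs = k \<and> set rs \<subseteq> vecs n \<and> span n rs = span n rows"
  obtain rows' where rows': "set rows' \<subseteq> vecs n" "span n rows' = span n rows"
    "card (span n rows') = 2 ^ length rows'"
    using span_basis_exists[OF assms] .
  then have "code_dim n (span n rows) \<le> length rows'"
    unfolding code_dim_def by (blast intro: Least_le)
  moreover obtain rs where "length rs = code_dim n (span n rows)" "set rs \<subseteq> vecs n"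
    "span n rs = span n rows"
    using LeastI[of ?spans "length rows'"] rows' unfolding code_dim_def by blast
  then have "2 ^ length rows' \<le> (2::nat) ^ code_dim n (span n rows)"
    using card_span_le[of rs n] rows' by simp
  ultimately show ?thesis
    using rows' by simp
qed

lemma linear_code_eq_span:
  assumes "linear_code n V"
  obtains rows where "set rows \<subseteq> vecs n" "span n rows = V"
proof -
  obtain rows where rows: "set rows = V"
    using finite_list finite_subset_vecs linear_code_vecs[OF assms] by blast
  moreover have "set rows \<subseteq> vecs n"
    using rows linear_code_vecs[OF assms] by simp
  ultimately have "span n rows = V"
    using span_subset_linear_code[OF assms] set_subset_span[of rows n] by auto
  then show thesis
    using that rows linear_code_vecs[OF assms] by blast
qed

lemma card_linear_code: "linear_code n V \<Longrightarrow> card V = 2 ^ code_dim n V"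
  by (elim linear_code_eq_span) (use card_span in blast)

lemma code_dim_eq_iff_card: "linear_code n V \<Longrightarrow> code_dim n V = d \<longleftrightarrow> card V = 2 ^ d"
  by (simp add: card_linear_code)

lemma code_dim_le:
  assumes "linear_code n C"
  shows "code_dim n C \<le> n"
proof -
  have "card C \<le> card (vecs n)"
    using linear_code_vecs[OF assms] by (rule card_mono[OF finite_vecs])
  then have "(2::nat) ^ code_dim n C \<le> 2 ^ n"
    by (simp add: card_linear_code[OF assms] card_vecs)
  then show ?thesis
    by simp
qed

lemma card_le_twice_hyperplane:
  assumes S: "linear_code n S" and x: "length x = n"
  shows "card S \<le> 2 * card {s \<in> S. dot x s = 0}"
proof -
  let ?S0 = "{s \<in> S. dot x s = 0}" and ?S1 = "{s \<in> S. dot x s = 1}"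
  have SV: "S \<subseteq> vecs n"
    using linear_code_vecs[OF S] .
  then have fin: "finite ?S0" "finite ?S1"
    using finite_subset_vecs[OF SV] by simp_all
  have "S = ?S0 \<union> ?S1" "?S0 \<inter> ?S1 = {}"
    by (auto intro: bit.exhaust)
  then have "card S = card ?S0 + card ?S1"
    using card_Un_disjoint[OF fin] by simp
  moreover have "card ?S1 \<le> card ?S0"
  proof (cases "?S1 = {}")
    case True
    then show ?thesis
      by (metis card.empty le0)
  next
    case False
    then obtain u where u: "u \<in> S" "dot x u = 1"
      by auto
    have "vadd u ` ?S1 \<subseteq> ?S0"
      using u SV linear_code_vadd[OF S] x by (auto simp: dot_vadd_right subset_iff)
    then have "card (vadd u ` ?S1) \<le> card ?S0"
      by (rule card_mono[OF fin(1)])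
    moreover have "inj_on (vadd u) ?S1"
      using u SV by (intro inj_on_vadd) (auto simp: subset_iff)
    ultimately show ?thesis
      by (simp add: card_image)
  qed
  ultimately show ?thesis
    by simp
qed

section \<open>Duals\<close>

lemma linear_code_dual: "V \<subseteq> vecs n \<Longrightarrow> linear_code n (dual n V)"
  by (rule linear_code_if_add_closed) (auto simp: dual_def dot_vadd_left subset_iff)

lemma linear_code_hull: "linear_code n C \<Longrightarrow> linear_code n (hull n C)"
  unfolding hull_def by (intro linear_code_Int linear_code_dual linear_code_vecs)

lemma mem_dual_spanI:
  assumes "set rows \<subseteq> vecs n" and "length v = n" and "\<forall>r \<in> set rows. dot v r = 0"
  shows "v \<in> dual n (span n rows)"
proof -
  have "set rows \<subseteq> dual n {v}"
    using assms by (auto simp: dual_def dot_commute subset_iff)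
  then have "span n rows \<subseteq> dual n {v}"
    using assms(2) by (intro span_subset_linear_code linear_code_dual) auto
  then show ?thesis
    using assms(2) by (auto simp: dual_def dot_commute)
qed

lemma dual_Un_translate:
  assumes "P \<subseteq> vecs m" and "P \<noteq> {}" and "length v = m"
  shows "dual m (P \<union> vadd v ` P) = {u \<in> dual m P. dot u v = 0}"
proof -
  obtain p0 where "p0 \<in> P"
    using assms(2) by blast
  have "dot u (vadd v p) = dot u v + dot u p" if "length u = m" "p \<in> P" for u p
    using that assms(1,3) by (auto simp: dot_vadd_right)
  then show ?thesis
    using \<open>p0 \<in> P\<close> by (fastforce simp: dual_def)
qed

section \<open>The extended code\<close>

definition ext_gen_row :: "bit list \<Rightarrow> bit list \<Rightarrow> bit list" where
  "ext_gen_row x r = [dot x r, 0] @ r"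

definition ext_check_row :: "bit list \<Rightarrow> bit list \<Rightarrow> bit list" where
  "ext_check_row x s = [0, dot x s] @ s"

definition ext_code :: "bit list \<Rightarrow> bit list set \<Rightarrow> bit list set" where
  "ext_code x C = ext_gen_row x ` C \<union> vadd ([1, 1] @ x) ` ext_gen_row x ` C"

definition ext_check_code :: "bit list \<Rightarrow> bit list set \<Rightarrow> bit list set" where
  "ext_check_code x D = ext_check_row x ` D \<union> vadd ([1, 1] @ x) ` ext_check_row x ` D"

definition transvect :: "bit list \<Rightarrow> bit list \<Rightarrow> bit list" where
  "transvect x c = vadd c (vsmult (dot x c) x)"

lemma span_ext_gen_rows:
  assumes "set G \<subseteq> vecs n" and "length x = n"
  shows "span (n + 2) (([1, 1] @ x) # map (ext_gen_row x) G) = ext_code x (span n G)"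
  unfolding ext_code_def using assms
  by (intro span_Cons_map) (auto simp: ext_gen_row_def vzero_Suc dot_vadd_right)

lemma span_ext_check_rows:
  assumes "set H \<subseteq> vecs n" and "length x = n"
  shows "span (n + 2) (([1, 1] @ x) # map (ext_check_row x) H) = ext_check_code x (span n H)"
  unfolding ext_check_code_def using assms
  by (intro span_Cons_map) (auto simp: ext_check_row_def vzero_Suc dot_vadd_right)

lemma card_ext_code:
  assumes "A \<subseteq> vecs n" and "length x = n"
  shows "card (ext_code x A) = 2 * card A"
proof -
  have "ext_gen_row x ` A \<inter> vadd ([1, 1] @ x) ` ext_gen_row x ` A = {}"
    by (auto simp: ext_gen_row_def)
  then have "card (ext_code x A) = 2 * card (ext_gen_row x ` A)"
    unfolding ext_code_def using assms by (intro card_Un_translate) (auto simp: ext_gen_row_def)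
  moreover have "inj (ext_gen_row x)"
    by (rule injI) (simp add: ext_gen_row_def)
  ultimately show ?thesis
    by (simp add: card_image inj_on_subset)
qed

lemma mem_dual_ext_code_iff:
  assumes "C \<subseteq> vecs n" and "C \<noteq> {}" and "length x = n" and "length w = n"
  shows "a # b # w \<in> dual (n + 2) (ext_code x C) \<longleftrightarrow>
    vadd w (vsmult a x) \<in> dual n C \<and> b = a + dot w x"
proof -
  have "dot (a # b # w) (ext_gen_row x c) = dot (vadd w (vsmult a x)) c" if "c \<in> C" for c
  proof -
    have "length c = n"
      using that assms(1) by auto
    then show ?thesis
      using assms(3,4) by (simp add: ext_gen_row_def dot_vadd_left dot_vsmult_left add.commute)
  qed
  then have "a # b # w \<in> dual (n + 2) (ext_gen_row x ` C) \<longleftrightarrow> vadd w (vsmult a x) \<in> dual n C"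
    using assms(3,4) by (auto simp: dual_def)
  moreover have "dot (a # b # w) ([1, 1] @ x) = 0 \<longleftrightarrow> b = a + dot w x"
    by (auto simp: bit_add_eq_0_iff add.assoc add.left_commute[of b])
  moreover have "ext_gen_row x ` C \<subseteq> vecs (n + 2)"
    using assms(1) by (auto simp: ext_gen_row_def)
  ultimately show ?thesis
    unfolding ext_code_def using assms(2,3) by (simp add: dual_Un_translate)
qed

lemma mem_ext_check_code_iff:
  assumes "D \<subseteq> vecs n" and "length x = n" and "length w = n" and "dot x x = 0"
  shows "a # b # w \<in> ext_check_code x D \<longleftrightarrow>
    vadd w (vsmult a x) \<in> D \<and> b = a + dot w x"
proof (cases a)
  case zero
  have "a # b # w \<notin> vadd ([1, 1] @ x) ` ext_check_row x ` D"
    using zero by (auto simp: ext_check_row_def)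
  moreover have "a # b # w \<in> ext_check_row x ` D \<longleftrightarrow> w \<in> D \<and> b = dot w x"
    using zero dot_commute[of x w] assms(2,3) by (auto simp: ext_check_row_def intro: rev_image_eqI)
  ultimately show ?thesis
    using zero assms(2,3) by (simp add: ext_check_code_def)
next
  case one
  have "a # b # w \<notin> ext_check_row x ` D"
    using one by (auto simp: ext_check_row_def)
  moreover have "a # b # w = vadd ([1, 1] @ x) (ext_check_row x s) \<longleftrightarrow>
      s = vadd w x \<and> b = 1 + dot w x" if "s \<in> D" for s
  proof -
    have s: "length s = n"
      using that assms(1) by auto
    have "a # b # w = vadd ([1, 1] @ x) (ext_check_row x s) \<longleftrightarrow>
        w = vadd x s \<and> b = 1 + dot x s"
      using one by (auto simp: ext_check_row_def)
    also have "\<dots> \<longleftrightarrow> s = vadd w x \<and> b = 1 + dot x s"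
      using s assms(2,3) vadd_eq_iff_left[of x s w] by (simp add: vadd_commute)
    also have "\<dots> \<longleftrightarrow> s = vadd w x \<and> b = 1 + dot w x"
      using assms(2-4) dot_commute[of x w] by (auto simp: dot_vadd_right)
    finally show ?thesis .
  qed
  ultimately show ?thesis
    using one by (auto simp: ext_check_code_def)
qed

lemma ext_check_code_subset_vecs:
  "D \<subseteq> vecs n \<Longrightarrow> length x = n \<Longrightarrow> ext_check_code x D \<subseteq> vecs (n + 2)"
  by (auto simp: ext_check_code_def ext_check_row_def)

lemma dual_ext_code:
  assumes C: "linear_code n C" and x: "length x = n" "dot x x = 0"
  shows "dual (n + 2) (ext_code x C) = ext_check_code x (dual n C)"
proof (rule set_eqI)
  fix u
  have CV: "C \<subseteq> vecs n" and "C \<noteq> {}"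
    using linear_code_vecs[OF C] linear_code_vzero[OF C] by auto
  show "u \<in> dual (n + 2) (ext_code x C) \<longleftrightarrow> u \<in> ext_check_code x (dual n C)"
  proof (cases "length u = n + 2")
    case True
    then obtain a b w where u: "u = a # b # w" and w: "length w = n"
      by (cases u; cases "tl u") auto
    have "dual n C \<subseteq> vecs n"
      by (auto simp: dual_def)
    then show ?thesis
      unfolding u using mem_dual_ext_code_iff[OF CV \<open>C \<noteq> {}\<close> x(1) w]
        mem_ext_check_code_iff[OF _ x(1) w x(2)] by simp
  next
    case False
    moreover have "ext_check_code x (dual n C) \<subseteq> vecs (n + 2)"
      using x(1) by (intro ext_check_code_subset_vecs) (auto simp: dual_def)
    ultimately show ?thesis
      by (auto simp: dual_def)
  qed
qed

lemma transvect_vadd: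
  assumes "length u = length x" and "length v = length x"
  shows "transvect x (vadd u v) = vadd (transvect x u) (transvect x v)"
  using assms by (intro nth_equalityI) (auto simp: transvect_def dot_vadd_right algebra_simps)

lemma transvect_vzero: "length x = n \<Longrightarrow> transvect x (vzero n) = vzero n"
  by (simp add: transvect_def)

lemma transvect_orth: "length c = length x \<Longrightarrow> dot x c = 0 \<Longrightarrow> transvect x c = c"
  by (simp add: transvect_def)

lemma vadd_vsmult_eq_transvect:
  assumes "length c = length x"
  shows "vadd (vadd x c) (vsmult (1 + dot x c) x) = transvect x c"
proof (cases "dot x c")
  case zero
  then show ?thesis
    using assms by (simp add: transvect_def vadd_commute[of x c] vadd_assoc)
next
  case one
  then show ?thesis
    using assms by (simp add: transvect_def vadd_commute)
qed

lemma ext_gen_row_mem_dual_iff: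
  assumes C: "linear_code n C" and x: "length x = n" "dot x x = 0" and c: "length c = n"
  shows "ext_gen_row x c \<in> dual (n + 2) (ext_code x C) \<longleftrightarrow> transvect x c \<in> dual n C"
    and "vadd ([1, 1] @ x) (ext_gen_row x c) \<in> dual (n + 2) (ext_code x C) \<longleftrightarrow>
      transvect x c \<in> dual n C"
proof -
  have CV: "C \<subseteq> vecs n" and "C \<noteq> {}"
    using linear_code_vecs[OF C] linear_code_vzero[OF C] by auto
  note mem_iff = mem_dual_ext_code_iff[OF CV \<open>C \<noteq> {}\<close> x(1)]
  show "ext_gen_row x c \<in> dual (n + 2) (ext_code x C) \<longleftrightarrow> transvect x c \<in> dual n C"
    using mem_iff[OF c] dot_commute[of c x] c x by (simp add: ext_gen_row_def transvect_def)
  have "vadd ([1, 1] @ x) (ext_gen_row x c) = (1 + dot x c) # 1 # vadd x c"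
    by (simp add: ext_gen_row_def)
  moreover have "dot (vadd x c) x = dot x c"
    using c x dot_commute[of c x] by (simp add: dot_vadd_left)
  ultimately show "vadd ([1, 1] @ x) (ext_gen_row x c) \<in> dual (n + 2) (ext_code x C) \<longleftrightarrow>
      transvect x c \<in> dual n C"
    using mem_iff[of "vadd x c"] c x vadd_vsmult_eq_transvect[of c x] by (simp add: add.assoc)
qed

lemma hull_ext_code:
  assumes C: "linear_code n C" and x: "length x = n" "dot x x = 0"
  shows "hull (n + 2) (ext_code x C) = ext_code x {c \<in> C. transvect x c \<in> dual n C}"
proof -
  define D where "D = dual (n + 2) (ext_code x C)"
  have len: "length c = n" if "c \<in> C" for c
    using that linear_code_vecs[OF C] by auto
  have "ext_gen_row x ` C \<inter> D = ext_gen_row x ` {c \<in> C. transvect x c \<in> dual n C}"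
    using ext_gen_row_mem_dual_iff(1)[OF C x len] unfolding D_def by auto
  moreover have "vadd ([1, 1] @ x) ` ext_gen_row x ` C \<inter> D =
      vadd ([1, 1] @ x) ` ext_gen_row x ` {c \<in> C. transvect x c \<in> dual n C}"
    using ext_gen_row_mem_dual_iff(2)[OF C x len] unfolding D_def by auto
  ultimately have "ext_code x C \<inter> D = ext_code x {c \<in> C. transvect x c \<in> dual n C}"
    unfolding ext_code_def by blast
  then show ?thesis
    by (simp add: hull_def D_def)
qed

lemma linear_code_transvect_preimage:
  assumes C: "linear_code n C" and x: "length x = n"
  shows "linear_code n {c \<in> C. transvect x c \<in> dual n C}"
proof (rule linear_code_if_add_closed)
  have CV: "C \<subseteq> vecs n" and dual: "linear_code n (dual n C)"
    using linear_code_vecs[OF C] linear_code_dual by auto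
  show "{c \<in> C. transvect x c \<in> dual n C} \<subseteq> vecs n"
    using CV by auto
  show "vzero n \<in> {c \<in> C. transvect x c \<in> dual n C}"
    using linear_code_vzero[OF C] linear_code_vzero[OF dual] transvect_vzero[OF x] by simp
  fix u v assume "u \<in> {c \<in> C. transvect x c \<in> dual n C}" "v \<in> {c \<in> C. transvect x c \<in> dual n C}"
  moreover have "length u = length x" "length v = length x"
    using calculation CV x by auto
  ultimately show "vadd u v \<in> {c \<in> C. transvect x c \<in> dual n C}"
    using linear_code_vadd[OF C] linear_code_vadd[OF dual] by (simp add: transvect_vadd)
qed

lemma hull_hyperplane_eq_transvect_preimage:
  assumes "C \<subseteq> vecs n" and "length x = n"
  shows "{c \<in> hull n C. dot x c = 0} = {c \<in> C. transvect x c \<in> dual n C \<and> dot x c = 0}"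
  using assms transvect_orth[of _ x] by (auto simp: hull_def subset_iff)

lemma card_transvect_preimage_bounds:
  assumes C: "linear_code n C" and x: "length x = n"
  defines "K \<equiv> {c \<in> C. transvect x c \<in> dual n C}"
  shows "card (hull n C) \<le> 2 * card K" and "card K \<le> 2 * card (hull n C)"
proof -
  let ?H0 = "{c \<in> hull n C. dot x c = 0}"
  have K: "linear_code n K" and hull: "linear_code n (hull n C)"
    unfolding K_def using linear_code_transvect_preimage[OF C x] linear_code_hull[OF C] by auto
  have H0: "?H0 = {c \<in> K. dot x c = 0}"
    unfolding K_def using hull_hyperplane_eq_transvect_preimage[OF linear_code_vecs[OF C] x] by auto
  have "card (hull n C) \<le> 2 * card ?H0"
    using card_le_twice_hyperplane[OF hull x] .
  also have "card ?H0 \<le> card K"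
    unfolding H0 by (intro card_mono finite_subset_vecs[OF linear_code_vecs[OF K]]) auto
  finally show "card (hull n C) \<le> 2 * card K"
    by simp
  have "card K \<le> 2 * card ?H0"
    unfolding H0 using card_le_twice_hyperplane[OF K x] .
  also have "card ?H0 \<le> card (hull n C)"
    by (intro card_mono finite_subset_vecs[OF linear_code_vecs[OF hull]]) auto
  finally show "card K \<le> 2 * card (hull n C)"
    by simp
qed

lemma transvect_preimage_eq_hull:
  assumes "C \<subseteq> vecs n" and "length x = n" and "x \<in> dual n C"
  shows "{c \<in> C. transvect x c \<in> dual n C} = hull n C"
proof -
  have "dot x c = 0" if "c \<in> C" for c
    using that assms by (auto simp: dual_def)
  then show ?thesis
    using hull_hyperplane_eq_transvect_preimage[OF assms(1,2)] by (auto simp: hull_def)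
qed

lemma linear_code_ext_code:
  assumes C: "linear_code n C" and x: "length x = n"
  shows "linear_code (n + 2) (ext_code x C)"
proof -
  obtain G where "set G \<subseteq> vecs n" "span n G = C"
    using linear_code_eq_span[OF C] .
  moreover have "set (([1, 1] @ x) # map (ext_gen_row x) G) \<subseteq> vecs (n + 2)"
    using calculation x by (auto simp: ext_gen_row_def)
  ultimately show ?thesis
    using linear_code_span span_ext_gen_rows x by metis
qed

lemma code_dim_ext_code:
  assumes C: "linear_code n C" and x: "length x = n"
  shows "code_dim (n + 2) (ext_code x C) = code_dim n C + 1"
proof -
  have "card (ext_code x C) = 2 ^ (code_dim n C + 1)"
    using card_ext_code[OF linear_code_vecs[OF C] x] card_linear_code[OF C] by simp
  then show ?thesis
    using code_dim_eq_iff_card[OF linear_code_ext_code[OF C x]] by blast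
qed

lemma card_hull_ext_code:
  assumes C: "linear_code n C" and x: "length x = n" "dot x x = 0"
  shows "card (hull (n + 2) (ext_code x C)) = 2 * card {c \<in> C. transvect x c \<in> dual n C}"
  unfolding hull_ext_code[OF C x]
  by (rule card_ext_code) (use linear_code_vecs[OF C] x(1) in auto)

lemma code_dim_hull_ext_code:
  assumes C: "linear_code n C" and x: "length x = n" "dot x x = 0"
  defines "l \<equiv> code_dim n (hull n C)" and "d \<equiv> code_dim (n + 2) (hull (n + 2) (ext_code x C))"
  shows "l \<le> d" and "d \<le> l + 2"
proof -
  have "card (hull n C) = 2 ^ l"
    unfolding l_def using card_linear_code[OF linear_code_hull[OF C]] .
  moreover have "card (hull (n + 2) (ext_code x C)) = 2 ^ d"
    unfolding d_def by (intro card_linear_code linear_code_hull linear_code_ext_code C x)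
  ultimately have "(2::nat) ^ l \<le> 2 ^ d" and "(2::nat) ^ d \<le> 2 ^ (l + 2)"
    using card_hull_ext_code[OF C x] card_transvect_preimage_bounds[OF C x(1)] by simp_all
  then show "l \<le> d" and "d \<le> l + 2"
    by (simp_all only: power_increasing_iff one_less_numeral_iff semiring_norm(76))
qed

lemma code_dim_hull_ext_code_orth:
  assumes C: "linear_code n C" and x: "length x = n" "dot x x = 0" and orth: "x \<in> dual n C"
  shows "code_dim (n + 2) (hull (n + 2) (ext_code x C)) = code_dim n (hull n C) + 1"
proof -
  have "card (hull (n + 2) (ext_code x C)) = 2 ^ (code_dim n (hull n C) + 1)"
    using card_hull_ext_code[OF C x] transvect_preimage_eq_hull[OF linear_code_vecs[OF C] x(1) orth]
      card_linear_code[OF linear_code_hull[OF C]]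
    by simp
  then show ?thesis
    using code_dim_eq_iff_card[OF linear_code_hull[OF linear_code_ext_code[OF C x(1)]]] by blast
qed

lemma is_code_ext_code: "is_code n k C \<Longrightarrow> length x = n \<Longrightarrow> is_code (n + 2) (k + 1) (ext_code x C)"
  using linear_code_ext_code[of n C x] code_dim_ext_code[of n C x] by (simp add: is_code_def)

lemma generator_matrix_ext_code:
  assumes "generator_matrix n k G C" and "length x = n"
  shows "generator_matrix (n + 2) (k + 1) (([1, 1] @ x) # map (ext_gen_row x) G) (ext_code x C)"
  using assms span_ext_gen_rows[of G n x] by (auto simp: generator_matrix_def ext_gen_row_def)

lemma parity_check_matrix_ext_code:
  assumes "linear_code n C" and "length x = n" and "dot x x = 0"
    and "parity_check_matrix n m H C"
  shows "parity_check_matrix (n + 2) (m + 1) (([1, 1] @ x) # map (ext_check_row x) H) (ext_code x C)"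
  using assms span_ext_check_rows[of H n x] dual_ext_code[OF assms(1-3)]
  by (auto simp: parity_check_matrix_def generator_matrix_def ext_check_row_def)

lemma generator_matrix_orth:
  assumes "generator_matrix n k G C" and "length x = n" and "\<forall>i<k. dot x (G ! i) = 0"
  shows "x \<in> dual n C"
proof -
  have "\<forall>r \<in> set G. dot x r = 0"
    using assms by (auto simp: generator_matrix_def in_set_conv_nth)
  then show ?thesis
    using assms mem_dual_spanI[of G n x] by (auto simp: generator_matrix_def)
qed

theorem theorem2:
  fixes n k l :: nat and C :: "bit list set" and G H :: "bit list list" and x :: "bit list"
  assumes "is_code n k C"
    and "code_dim n (hull n C) = l"
    and "l \<le> k"
    and "generator_matrix n k G C"
    and "parity_check_matrix n (n - k) H C"
    and "x \<in> vecs n"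
    and "dot x x = 0"
  defines "G2 \<equiv> ([1, 1] @ x) # map (\<lambda>r. [dot x r, 0] @ r) G"
    and "H2 \<equiv> ([1, 1] @ x) # map (\<lambda>s. [0, dot x s] @ s) H"
    and "C2 \<equiv> span (n + 2) (([1, 1] @ x) # map (\<lambda>r. [dot x r, 0] @ r) G)"
  shows "is_code (n + 2) (k + 1) C2
      \<and> generator_matrix (n + 2) (k + 1) G2 C2
      \<and> code_dim (n + 2) (hull (n + 2) C2) \<in> {l, l + 1, l + 2}
      \<and> ((\<forall>i<k. dot x (G ! i) = 0) \<longrightarrow> code_dim (n + 2) (hull (n + 2) C2) = l + 1)
      \<and> ((\<exists>i<k. dot x (G ! i) \<noteq> 0) \<longrightarrow> code_dim (n + 2) (hull (n + 2) C2) \<in> {l, l + 1, l + 2})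
      \<and> parity_check_matrix (n + 2) ((n + 2) - (k + 1)) H2 C2"
proof -
  have x: "length x = n" and xx: "dot x x = 0" and C: "linear_code n C"
    using assms(1,6,7) by (auto simp: is_code_def)
  have G2: "G2 = ([1, 1] @ x) # map (ext_gen_row x) G"
    and H2: "H2 = ([1, 1] @ x) # map (ext_check_row x) H"
    unfolding G2_def H2_def ext_gen_row_def ext_check_row_def by simp_all
  have gen: "generator_matrix (n + 2) (k + 1) G2 (ext_code x C)"
    unfolding G2 using generator_matrix_ext_code[OF assms(4) x] .
  then have C2: "C2 = ext_code x C"
    unfolding C2_def G2_def[symmetric] by (simp add: generator_matrix_def)
  have "(n + 2) - (k + 1) = (n - k) + 1"
    using code_dim_le[OF C] assms(1) by (simp add: is_code_def)
  then have "parity_check_matrix (n + 2) ((n + 2) - (k + 1)) H2 C2"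
    unfolding H2 C2 using parity_check_matrix_ext_code[OF C x xx assms(5)] by simp
  moreover have "code_dim (n + 2) (hull (n + 2) C2) \<in> {l, l + 1, l + 2}"
    using code_dim_hull_ext_code[OF C x xx] assms(2) by (auto simp: C2)
  moreover have "(\<forall>i<k. dot x (G ! i) = 0) \<longrightarrow> code_dim (n + 2) (hull (n + 2) C2) = l + 1"
    using code_dim_hull_ext_code_orth[OF C x xx generator_matrix_orth[OF assms(4) x]] assms(2)
    by (simp add: C2)
  ultimately show ?thesis
    using is_code_ext_code[OF assms(1) x] gen by (simp only: C2 simp_thms)
qed

end
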